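(* Let $N_r, N_t, L, m$ be positive integers with $L \le \min\{N_r, N_t\}$ and $L \le m \le N_t$. Let $h_1,\dots,h_L \in \mathbb{C}$ be path gains and let $\theta_{r,1},\dots,\theta_{r,L}$ and $\theta_{t,1},\dots,\theta_{t,L}$ be angles in $[-\pi/2,\pi/2)$. Define the channel matrix $$\mathbf{H} = \sqrt{\tfrac{N_r N_t}{L}}\sum_{l=1}^{L} h_l\, \mathbf{a}_r(\theta_{r,l})\, \mathbf{a}_t(\theta_{t,l})^H = \mathbf{A}_r \operatorname{diag}(\mathbf{h})\mathbf{A}_t^H \cdot \sqrt{\tfrac{N_rN_t}{L}},$$ where $\mathbf{a}_r(\theta) = \frac{1}{\sqrt{N_r}}[1, e^{-j\pi\sin\theta}, \dots, e^{-j\pi (N_r-1)\sin\theta}]^T \in \mathbb{C}^{N_r}$ and $\mathbf{a}_t(\theta) = \frac{1}{\sqrt{N_t}}[1, e^{-j\pi\sin\theta}, \dots, e^{-j\pi (N_t-1)\sin\theta}]^T\in\mathbb{C}^{N_t}$. Let $\mathbf{S} = \begin{bmatrix}\mathbf{I}_m \\ \mathbf{0}_{(N_t-m)\times m}\end{bmatrix} \in \mathbb{R}^{N_t\times m}$ and $\mathbf{H}_S = \mathbf{H}\mathbf{S}$, i.e. $\mathbf{H}_S$ consists of the first $m$ columns of $\mathbf{H}$. If the angles $\theta_{t,1},\dots,\theta_{t,L}$ are pairwise distinct and the angles $\theta_{r,1},\dots,\theta_{r,L}$ are pairwise distinct, then the column spaces of $\mathbf{H}_S$ and $\mathbf{H}$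 coincide: $\operatorname{col}(\mathbf{H}_S) = \operatorname{col}(\mathbf{H})$.
   Context: $\operatorname{col}(\mathbf{X})$ denotes the subspace spanned by the columns of $\mathbf{X}$; $j=\sqrt{-1}$; $(\cdot)^H$ is conjugate transpose. The array response vectors correspond to uniform linear arrays with half-wavelength antenna spacing. *)

theory Defs
  imports Complex_Main "Jordan_Normal_Form.Matrix"
begin

(* ULA response vector a(theta) in C^N, half-wavelength spacing:
   entries exp(-j*pi*i*sin theta)/sqrt N, i = 0..N-1 *)
definition ula :: "nat \<Rightarrow> real \<Rightarrow> complex vec" where
  "ula N \<theta> = vec N (\<lambda>i. exp (- \<i> * complex_of_real (pi * real i * sin \<theta>)) / complex_of_real (sqrt (real N)))"

(* H = sqrt(Nr Nt / L) * sum_{l<L} h_l a_r(theta_r l) a_t(theta_t l)^H  (paths indexed 0..L-1) *)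
definition channel :: "nat \<Rightarrow> nat \<Rightarrow> nat \<Rightarrow> (nat \<Rightarrow> complex) \<Rightarrow> (nat \<Rightarrow> real) \<Rightarrow> (nat \<Rightarrow> real) \<Rightarrow> complex mat" where
  "channel Nr Nt L h \<theta>r \<theta>t = mat Nr Nt (\<lambda>(i,k).
      complex_of_real (sqrt (real Nr * real Nt / real L)) *
      (\<Sum>l<L. h l * (ula Nr (\<theta>r l) $ i) * cnj (ula Nt (\<theta>t l) $ k)))"

definition sel_mat :: "nat \<Rightarrow> nat \<Rightarrow> complex mat" where
  "sel_mat Nt m = mat Nt m (\<lambda>(i,k). if i = k then 1 else 0)"

definition col_space :: "complex mat \<Rightarrow> complex vec set" where
  "col_space M = {M *\<^sub>v x | x. x \<in> carrier_vec (dim_col M)}"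

end

theory Submission
  imports Defs "HOL-Computational_Algebra.Polynomial"
begin

(* H x depends on x only through the L numbers a_t(\<theta>_{t,l})^H x.  For x = S y, the number
   a_t(\<theta>)^H x is, up to the factor 1 / sqrt N_t, the polynomial with coefficients y evaluated
   at e^{j \<pi> sin \<theta>}.  Distinct angles in [-\<pi>/2, \<pi>/2) give distinct nodes, so by Lagrange
   interpolation a polynomial of degree < L \<le> m attains the values a_t(\<theta>_{t,l})^H v of any v;
   its coefficient vector y then satisfies H S y = H v. *)

lemma lagrange_interpolation_exists:
  fixes w z :: "nat \<Rightarrow> 'a::field"
  assumes inj: "inj_on w {..<L}" and L: "0 < L"
  shows "\<exists>p. degree p < L \<and> (\<forall>i<L. poly p (w i) = z i)"
proof -
  define D where "D l = (\<Prod>j\<in>{..<L}-{l}. (w l - w j))" for l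
  define q where "q l = (\<Prod>j\<in>{..<L}-{l}. [:- w j, 1:])" for l
  define p where "p = (\<Sum>l<L. smult (z l / D l) (q l))"
  have dq: "degree (q l) \<le> L - 1" if "l < L" for l
  proof -
    have "degree (q l) \<le> sum (degree \<circ> (\<lambda>j. [:- w j, 1:])) ({..<L}-{l})"
      unfolding q_def by (rule degree_prod_sum_le) simp
    also have "\<dots> = L - 1" using that by simp
    finally show ?thesis .
  qed
  have "degree p \<le> L - 1"
    unfolding p_def
    by (rule degree_sum_le) (use dq in \<open>auto intro: order.trans[OF degree_smult_le]\<close>)
  hence "degree p < L" using L by simp
  moreover have "poly p (w i) = z i" if i: "i < L" for i
  proof -
    have pq: "poly (q l) (w i) = (\<Prod>j\<in>{..<L}-{l}. (w i - w j))" for l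
      unfolding q_def poly_prod by simp
    have q0: "poly (q l) (w i) = 0" if "l < L" "l \<noteq> i" for l
      unfolding pq using i that by (intro prod_zero) auto
    have "D i \<noteq> 0"
      unfolding D_def using inj i by (auto simp: inj_on_def)
    have "poly p (w i) = (\<Sum>l<L. z l / D l * poly (q l) (w i))"
      unfolding p_def poly_sum by simp
    also have "\<dots> = z i / D i * poly (q i) (w i)"
      using i q0 by (subst sum.remove[of _ i]) (auto intro!: sum.neutral)
    also have "\<dots> = z i" using \<open>D i \<noteq> 0\<close> unfolding pq D_def by simp
    finally show ?thesis .
  qed
  ultimately show ?thesis by blast
qed

lemma col_space_mult_subset:
  assumes "A \<in> carrier_mat n k" "B \<in> carrier_mat k m"
  shows "col_space (A * B) \<subseteq> col_space A"
proof
  fix y assume "y \<in> col_space (A * B)"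
  then obtain x where x: "x \<in> carrier_vec m" and "y = (A * B) *\<^sub>v x"
    using assms by (auto simp: col_space_def)
  hence "y = A *\<^sub>v (B *\<^sub>v x)" using assms by (simp add: assoc_mult_mat_vec)
  moreover have "B *\<^sub>v x \<in> carrier_vec (dim_col A)" using assms x by simp
  ultimately show "y \<in> col_space A" unfolding col_space_def by blast
qed

lemma col_space_mult_eqI:
  assumes A: "A \<in> carrier_mat n k" and B: "B \<in> carrier_mat k m"
    and reach: "\<And>v. v \<in> carrier_vec k \<Longrightarrow> \<exists>x\<in>carrier_vec m. A *\<^sub>v (B *\<^sub>v x) = A *\<^sub>v v"
  shows "col_space (A * B) = col_space A"
proof
  show "col_space A \<subseteq> col_space (A * B)"
  proof
    fix y assume "y \<in> col_space A"
    then obtain v where "v \<in> carrier_vec k" and y: "y = A *\<^sub>v v"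
      using A by (auto simp: col_space_def)
    then obtain x where x: "x \<in> carrier_vec m" and "A *\<^sub>v (B *\<^sub>v x) = A *\<^sub>v v"
      using reach by blast
    hence "y = (A * B) *\<^sub>v x" using y A B by (simp add: assoc_mult_mat_vec)
    with x B show "y \<in> col_space (A * B)" unfolding col_space_def by auto
  qed
qed (rule col_space_mult_subset[OF A B])

lemma channel_carrier_mat: "channel Nr Nt L h \<theta>r \<theta>t \<in> carrier_mat Nr Nt"
  by (simp add: channel_def)

lemma sel_mat_carrier_mat: "sel_mat N m \<in> carrier_mat N m"
  by (simp add: sel_mat_def)

definition ula_coord :: "nat \<Rightarrow> real \<Rightarrow> complex vec \<Rightarrow> complex" where
  "ula_coord N \<theta> x = (\<Sum>k<N. cnj (ula N \<theta> $ k) * x $ k)"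

lemma channel_mult_vec_nth:
  assumes "x \<in> carrier_vec Nt" "i < Nr"
  shows "(channel Nr Nt L h \<theta>r \<theta>t *\<^sub>v x) $ i =
    complex_of_real (sqrt (real Nr * real Nt / real L)) *
    (\<Sum>l<L. h l * ula Nr (\<theta>r l) $ i * ula_coord Nt (\<theta>t l) x)"
proof -
  have "(channel Nr Nt L h \<theta>r \<theta>t *\<^sub>v x) $ i = complex_of_real (sqrt (real Nr * real Nt / real L)) *
     (\<Sum>k<Nt. \<Sum>l<L. h l * ula Nr (\<theta>r l) $ i * (cnj (ula Nt (\<theta>t l) $ k) * x $ k))"
    using assms
    by (simp add: channel_def mult_mat_vec_def scalar_prod_def lessThan_atLeast0
        sum_distrib_left sum_distrib_right mult.assoc)
  also have "\<dots> = complex_of_real (sqrt (real Nr * real Nt / real L)) *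
     (\<Sum>l<L. h l * ula Nr (\<theta>r l) $ i * ula_coord Nt (\<theta>t l) x)"
    by (subst sum.swap) (simp add: ula_coord_def sum_distrib_left)
  finally show ?thesis .
qed

lemma channel_mult_vec_cong:
  assumes "u \<in> carrier_vec Nt" "v \<in> carrier_vec Nt"
    and "\<And>l. l < L \<Longrightarrow> ula_coord Nt (\<theta>t l) u = ula_coord Nt (\<theta>t l) v"
  shows "channel Nr Nt L h \<theta>r \<theta>t *\<^sub>v u = channel Nr Nt L h \<theta>r \<theta>t *\<^sub>v v"
proof (rule eq_vecI)
  fix i assume "i < dim_vec (channel Nr Nt L h \<theta>r \<theta>t *\<^sub>v v)"
  hence "i < Nr" by (simp add: carrier_matD[OF channel_carrier_mat])
  thus "(channel Nr Nt L h \<theta>r \<theta>t *\<^sub>v u) $ i = (channel Nr Nt L h \<theta>r \<theta>t *\<^sub>v v) $ i"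
    using assms by (simp add: channel_mult_vec_nth)
qed (simp add: channel_carrier_mat)

lemma cnj_ula_nth:
  assumes "k < N"
  shows "cnj (ula N \<theta> $ k) = cis (pi * sin \<theta>) ^ k / complex_of_real (sqrt (real N))"
proof -
  have "ula N \<theta> $ k = cis (- (pi * real k * sin \<theta>)) / complex_of_real (sqrt (real N))"
    using assms by (simp add: ula_def cis_conv_exp)
  thus ?thesis by (simp add: cis_cnj DeMoivre mult_ac)
qed

lemma sel_mat_mult_vec_nth:
  assumes "x \<in> carrier_vec m" "k < N"
  shows "(sel_mat N m *\<^sub>v x) $ k = (if k < m then x $ k else 0)"
proof -
  have "(sel_mat N m *\<^sub>v x) $ k = (\<Sum>j<m. (if k = j then 1 else 0) * x $ j)"
    using assms by (simp add: sel_mat_def mult_mat_vec_def scalar_prod_def lessThan_atLeast0)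
  also have "\<dots> = (\<Sum>j<m. if k = j then x $ j else 0)"
    by (intro sum.cong) auto
  finally show ?thesis by simp
qed

lemma ula_coord_sel_mat_coeffs:
  fixes p :: "complex poly"
  assumes "degree p < m" "m \<le> N"
  shows "ula_coord N \<theta> (sel_mat N m *\<^sub>v vec m (\<lambda>k. complex_of_real (sqrt (real N)) * coeff p k))
    = poly p (cis (pi * sin \<theta>))"
proof -
  let ?w = "cis (pi * sin \<theta>)"
  let ?x = "vec m (\<lambda>k. complex_of_real (sqrt (real N)) * coeff p k)"
  have sqrt_N: "complex_of_real (sqrt (real N)) \<noteq> 0" using assms by simp
  have "ula_coord N \<theta> (sel_mat N m *\<^sub>v ?x) = (\<Sum>k<N. if k < m then cnj (ula N \<theta> $ k) * ?x $ k else 0)"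
    unfolding ula_coord_def by (intro sum.cong) (auto simp: sel_mat_mult_vec_nth)
  also have "\<dots> = (\<Sum>k\<in>{..<N} \<inter> {k. k < m}. cnj (ula N \<theta> $ k) * ?x $ k)"
    by (simp add: sum.If_cases)
  also have "{..<N} \<inter> {k. k < m} = {..<m}" using assms(2) by auto
  also have "(\<Sum>k<m. cnj (ula N \<theta> $ k) * ?x $ k) = (\<Sum>k<m. coeff p k * ?w ^ k)"
  proof (rule sum.cong)
    fix k assume "k \<in> {..<m}"
    with assms(2) sqrt_N show "cnj (ula N \<theta> $ k) * ?x $ k = coeff p k * ?w ^ k"
      by (simp add: cnj_ula_nth)
  qed simp
  also have "\<dots> = (\<Sum>k\<le>degree p. coeff p k * ?w ^ k)"
    using assms(1) by (intro sum.mono_neutral_right) (auto simp: coeff_eq_0)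
  finally show ?thesis by (simp add: poly_altdef)
qed

lemma inj_on_cis_pi: "inj_on (\<lambda>s. cis (pi * s)) {-1..<1}"
proof (rule inj_onI)
  fix s t :: real
  assume "s \<in> {-1..<1}" "t \<in> {-1..<1}" and "cis (pi * s) = cis (pi * t)"
  hence "cos (pi * s - pi * t) = 1"
    by (metis cis.sel(1) cis_divide div_self cis_neq_zero one_complex.sel(1))
  then obtain n :: int where "pi * s - pi * t = of_int n * 2 * pi"
    by (auto simp: cos_one_2pi_int)
  hence "pi * (s - t) = pi * (2 * of_int n)" by (simp add: algebra_simps)
  hence "s - t = 2 * of_int n" by simp
  moreover have "\<bar>s - t\<bar> < 2" using \<open>s \<in> _\<close> \<open>t \<in> _\<close> by auto
  ultimately have "n = 0" by simp
  with \<open>s - t = 2 * of_int n\<close> show "s = t" by simp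
qed

lemma sin_atLeastLessThan_half_pi:
  assumes "\<theta> \<in> {-pi/2..<pi/2}"
  shows "sin \<theta> \<in> {-1..<1}"
proof -
  have "sin \<theta> < sin (pi/2)" using assms by (intro sin_monotone_2pi) auto
  thus ?thesis by simp
qed

lemma inj_on_cis_pi_sin:
  "inj_on (\<lambda>\<theta>. cis (pi * sin \<theta>)) {-pi/2..<pi/2}"
proof -
  have "inj_on sin {-pi/2..<pi/2}"
    by (rule inj_onI) (auto intro: sin_inj_pi)
  moreover have "sin ` {-pi/2..<pi/2} \<subseteq> {-1..<1}"
    using sin_atLeastLessThan_half_pi by blast
  ultimately show ?thesis
    using comp_inj_on[of sin, OF _ inj_on_subset[OF inj_on_cis_pi]] by (simp add: o_def)
qed

(* The receive angles enter H x only as fixed weights. *)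
lemma channel_sel_mat_reaches:
  assumes "0 < L" "L \<le> m" "m \<le> Nt"
    and "\<forall>l<L. - pi / 2 \<le> \<theta>t l \<and> \<theta>t l < pi / 2" "inj_on \<theta>t {..<L}"
    and v: "v \<in> carrier_vec Nt"
  shows "\<exists>x\<in>carrier_vec m.
    channel Nr Nt L h \<theta>r \<theta>t *\<^sub>v (sel_mat Nt m *\<^sub>v x) = channel Nr Nt L h \<theta>r \<theta>t *\<^sub>v v"
proof -
  define w where "w l = cis (pi * sin (\<theta>t l))" for l
  have "\<theta>t ` {..<L} \<subseteq> {-pi/2..<pi/2}" using assms(4) by auto
  hence "inj_on (\<lambda>\<theta>. cis (pi * sin \<theta>)) (\<theta>t ` {..<L})"
    by (rule inj_on_subset[OF inj_on_cis_pi_sin])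
  hence "inj_on w {..<L}"
    unfolding w_def using comp_inj_on[OF assms(5)] by (simp add: o_def)
  then obtain p where "degree p < L" and p: "\<forall>l<L. poly p (w l) = ula_coord Nt (\<theta>t l) v"
    using lagrange_interpolation_exists[of w L "\<lambda>l. ula_coord Nt (\<theta>t l) v"] \<open>0 < L\<close> by blast
  define x where "x = vec m (\<lambda>k. complex_of_real (sqrt (real Nt)) * coeff p k)"
  have x: "x \<in> carrier_vec m" by (simp add: x_def)
  have "channel Nr Nt L h \<theta>r \<theta>t *\<^sub>v (sel_mat Nt m *\<^sub>v x) = channel Nr Nt L h \<theta>r \<theta>t *\<^sub>v v"
  proof (rule channel_mult_vec_cong[OF _ v])
    show "sel_mat Nt m *\<^sub>v x \<in> carrier_vec Nt"
      using mult_mat_vec_carrier[OF sel_mat_carrier_mat x] .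
    fix l assume "l < L"
    with p have "ula_coord Nt (\<theta>t l) v = poly p (w l)" by simp
    also have "\<dots> = ula_coord Nt (\<theta>t l) (sel_mat Nt m *\<^sub>v x)"
      unfolding x_def w_def
      using ula_coord_sel_mat_coeffs \<open>degree p < L\<close> assms(2,3) by simp
    finally show "ula_coord Nt (\<theta>t l) (sel_mat Nt m *\<^sub>v x) = ula_coord Nt (\<theta>t l) v" ..
  qed
  with x show ?thesis by blast
qed

theorem lemma1:
  fixes Nr Nt L m :: nat and h :: "nat \<Rightarrow> complex" and \<theta>r \<theta>t :: "nat \<Rightarrow> real"
  assumes "0 < Nr" "0 < Nt" "0 < L" "0 < m"
    and "L \<le> min Nr Nt" "L \<le> m" "m \<le> Nt"
    and "\<forall>l<L. - pi / 2 \<le> \<theta>r l \<and> \<theta>r l < pi / 2"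
    and "\<forall>l<L. - pi / 2 \<le> \<theta>t l \<and> \<theta>t l < pi / 2"
    and "inj_on \<theta>t {..<L}"
    and "inj_on \<theta>r {..<L}"
  shows "col_space (channel Nr Nt L h \<theta>r \<theta>t * sel_mat Nt m) = col_space (channel Nr Nt L h \<theta>r \<theta>t)"
proof (rule col_space_mult_eqI[OF channel_carrier_mat sel_mat_carrier_mat])
  show "\<exists>x\<in>carrier_vec m. channel Nr Nt L h \<theta>r \<theta>t *\<^sub>v (sel_mat Nt m *\<^sub>v x)
      = channel Nr Nt L h \<theta>r \<theta>t *\<^sub>v v" if "v \<in> carrier_vec Nt" for v
    by (rule channel_sel_mat_reaches[OF assms(3,6,7,9,10) that])
qed

end
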